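(* Let $n\geq 2$. $\mathrm{Aut}(\mathbf{D}_n)$, with the topology of pointwise convergence, is not extremely amenable.
   Context: Fix $n\geq 2$ and a set $D_n\subseteq\mathbb{Q}^n$ which is dense in $\mathbb{Q}^n$ (product topology) and such that no two distinct points of $D_n$ share a common coordinate; $\mathbf{D}_n=(D_n,<)$ with $<$ the product order ($\mathbf{a}<\mathbf{b}$ iff $a_i\leq b_i$ for all $i$ and $\mathbf{a}\neq\mathbf{b}$). A topological group is extremely amenable if every continuous action of it on a compact Hausdorff space has a fixed point. *)

theory Defs
  imports "HOL-Analysis.Analysis"
begin

definition prod_less :: "rat^'n \<Rightarrow> rat^'n \<Rightarrow> bool" where
  "prod_less a b \<longleftrightarrow> (\<forall>i. a $ i \<le> b $ i) \<and> a \<noteq> b"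

definition dense_in_Qn :: "(rat^'n) set \<Rightarrow> bool" where
  "dense_in_Qn D \<longleftrightarrow>
     (\<forall>a b. (\<forall>i. a $ i < b $ i) \<longrightarrow> (\<exists>d\<in>D. \<forall>i. a $ i < d $ i \<and> d $ i < b $ i))"

definition no_common_coord :: "(rat^'n) set \<Rightarrow> bool" where
  "no_common_coord D \<longleftrightarrow> (\<forall>x\<in>D. \<forall>y\<in>D. x \<noteq> y \<longrightarrow> (\<forall>i. x $ i \<noteq> y $ i))"

definition Aut_D :: "(rat^'n) set \<Rightarrow> (rat^'n \<Rightarrow> rat^'n) set" where
  "Aut_D D = {f \<in> D \<rightarrow>\<^sub>E D. bij_betw f D D \<and>
      (\<forall>x\<in>D. \<forall>y\<in>D. prod_less x y \<longleftrightarrow> prod_less (f x) (f y))}"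

text \<open>Topology of pointwise convergence on Aut(D): subspace of the product of discrete copies of D.\<close>
definition Aut_topology :: "(rat^'n) set \<Rightarrow> (rat^'n \<Rightarrow> rat^'n) topology" where
  "Aut_topology D = subtopology (product_topology (\<lambda>_. discrete_topology D) D) (Aut_D D)"

text \<open>Extreme amenability of a topological group (carrier G, multiplication mul, unit e,
  topology T), relative to the type 'x of the compact Hausdorff spaces acted on.\<close>
definition extremely_amenable ::
  "'g set \<Rightarrow> ('g \<Rightarrow> 'g \<Rightarrow> 'g) \<Rightarrow> 'g \<Rightarrow> 'g topology \<Rightarrow> 'x itself \<Rightarrow> bool" where
  "extremely_amenable G mul e T (_ :: 'x itself) \<longleftrightarrow>
     (\<forall>(X :: 'x topology) (act :: 'g \<Rightarrow> 'x \<Rightarrow> 'x).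
        compact_space X \<and> Hausdorff_space X \<and> topspace X \<noteq> {} \<and>
        continuous_map (prod_topology T X) X (\<lambda>(g, x). act g x) \<and>
        (\<forall>x\<in>topspace X. act e x = x) \<and>
        (\<forall>g\<in>G. \<forall>h\<in>G. \<forall>x\<in>topspace X. act (mul g h) x = act g (act h x))
      \<longrightarrow> (\<exists>x\<in>topspace X. \<forall>g\<in>G. act g x = x))"

end

(*
  If Aut(D_n) were extremely amenable, its continuous action on the compact space of linear
  orders of D, (g R)(a, b) = R (g^-1 a, g^-1 b), would fix a linear order R.  (The definition
  quantifies over flows on one fixed type, into which this space is embedded first.)  A bijection
  preserving R fixes each of its periodic points, since x <R g x would give
  x <R g x <R ... <R g^N x = x.  So it suffices to find an automorphism g of D_n and a point
  x with g x /= x and g^n x = x.  Let sigma be a cyclic permutation of the coordinates.  A back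
  and forth argument, using density and that distinct points of D differ in every coordinate,
  extends every finite partial map that turns the order of the i-th coordinates into the order
  of the (sigma i)-th coordinates to an automorphism of D_n; such a partial map is
  x_0 -> x_1 -> ... -> x_(n-1) -> x_0 for suitably chosen points x_j of D.
*)
theory Submission
  imports Defs
begin

section \<open>Flows on other types\<close>

lemma homeomorphic_maps_pullback_inv:
  assumes "inj f"
  shows "homeomorphic_maps X (pullback_topology (f ` topspace X) (inv f) X) f (inv f)"
proof -
  define X' where "X' = pullback_topology (f ` topspace X) (inv f) X"
  have "continuous_map X X' f"
    unfolding X'_def using assms by (intro continuous_map_pullback') (auto simp: o_def)
  moreover have "continuous_map X' X (inv f)"
    using continuous_map_pullback[OF continuous_map_id] by (simp add: X'_def)
  ultimately show ?thesis
    using assms by (auto simp: homeomorphic_maps_def X'_def topspace_pullback_topology)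
qed

lemma extremely_amenable_inj_type:
  fixes emb :: "'y \<Rightarrow> 'x"
  assumes EA: "extremely_amenable G mul e T TYPE('x)" and "inj emb"
  shows "extremely_amenable G mul e T TYPE('y)"
  unfolding extremely_amenable_def
proof (intro allI impI, elim conjE)
  fix X :: "'y topology" and act :: "'a \<Rightarrow> 'y \<Rightarrow> 'y"
  assume X: "compact_space X" "Hausdorff_space X" "topspace X \<noteq> {}"
    and cont: "continuous_map (prod_topology T X) X (\<lambda>(g, x). act g x)"
    and unit: "\<forall>x\<in>topspace X. act e x = x"
    and mul: "\<forall>g\<in>G. \<forall>h\<in>G. \<forall>x\<in>topspace X. act (mul g h) x = act g (act h x)"
  define X' where "X' = pullback_topology (emb ` topspace X) (inv emb) X"
  define act' where "act' g = emb \<circ> act g \<circ> inv emb" for g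
  have hom: "homeomorphic_maps X X' emb (inv emb)"
    unfolding X'_def using \<open>inj emb\<close> by (rule homeomorphic_maps_pullback_inv)
  have top': "topspace X' = emb ` topspace X"
    using \<open>inj emb\<close> by (auto simp: X'_def topspace_pullback_topology)
  have emb_cont: "continuous_map X X' emb" and inv_cont: "continuous_map X' X (inv emb)"
    using hom by (simp_all add: homeomorphic_maps_def)
  have "continuous_map (prod_topology T X') (prod_topology T X) (\<lambda>(g, z). (g, inv emb z))"
    using inv_cont by (simp add: continuous_map_prod_top)
  from continuous_map_compose[OF continuous_map_compose[OF this cont] emb_cont]
  have "continuous_map (prod_topology T X') X' (\<lambda>(g, z). act' g z)"
    by (simp add: act'_def o_def case_prod_unfold)
  moreover have "compact_space X'" "Hausdorff_space X'" "topspace X' \<noteq> {}"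
    using X homeomorphic_maps_imp_homeomorphic_space[OF hom] top'
      homeomorphic_compact_space homeomorphic_Hausdorff_space by blast+
  moreover have "\<forall>z\<in>topspace X'. act' e z = z"
    using unit \<open>inj emb\<close> by (auto simp: act'_def top')
  moreover have "\<forall>g\<in>G. \<forall>h\<in>G. \<forall>z\<in>topspace X'. act' (mul g h) z = act' g (act' h z)"
    using mul \<open>inj emb\<close> by (auto simp: act'_def top')
  ultimately obtain z where "z \<in> topspace X'" and fixed: "\<forall>g\<in>G. act' g z = z"
    using EA unfolding extremely_amenable_def by blast
  then obtain y where "y \<in> topspace X" "z = emb y" by (auto simp: top')
  moreover have "act g y = y" if "g \<in> G" for g
    using fixed that \<open>z = emb y\<close> \<open>inj emb\<close> by (auto simp: act'_def inj_eq)
  ultimately show "\<exists>x\<in>topspace X. \<forall>g\<in>G. act g x = x" by blast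
qed

lemma inj_pair_as_fun:
  assumes "u \<noteq> v"
  shows "inj (\<lambda>(a, b) z. if z = u then a else b)"
proof (rule injI)
  fix p q :: "'b \<times> 'b"
  assume eq: "(\<lambda>(a, b) z. if z = u then a else b) p = (\<lambda>(a, b) z. if z = u then a else b) q"
  have "fst p = fst q" "snd p = snd q"
    using fun_cong[OF eq, of u] fun_cong[OF eq, of v] assms by (simp_all add: case_prod_beta)
  then show "p = q" by (simp add: prod_eq_iff)
qed

lemma inj_pred_as_set_set:
  assumes "inj f"
  shows "inj (\<lambda>R. (\<lambda>p. {f p}) ` Collect R)"
proof (rule injI)
  have mem: "{f p} \<in> (\<lambda>p. {f p}) ` Collect Q \<longleftrightarrow> Q p" for Q p
  proof
    assume "{f p} \<in> (\<lambda>p. {f p}) ` Collect Q"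
    then obtain q where "Q q" "{f p} = {f q}" by blast
    then show "Q p" using injD[OF assms] by force
  qed simp
  fix R R' assume "(\<lambda>p. {f p}) ` Collect R = (\<lambda>p. {f p}) ` Collect R'"
  then show "R = R'" using mem[of _ R] mem[of _ R'] by (intro ext) metis
qed

section \<open>The flow of linear orders\<close>

definition lin_orders :: "'a set \<Rightarrow> ('a \<times> 'a \<Rightarrow> bool) set" where
  "lin_orders D = {R \<in> D \<times> D \<rightarrow>\<^sub>E UNIV.
     (\<forall>a\<in>D. \<not> R (a, a)) \<and> (\<forall>a\<in>D. \<forall>b\<in>D. a \<noteq> b \<longrightarrow> R (a, b) \<or> R (b, a)) \<and>
     (\<forall>a\<in>D. \<forall>b\<in>D. \<forall>c\<in>D. R (a, b) \<longrightarrow> R (b, c) \<longrightarrow> R (a, c))}"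

definition lin_order_space :: "'a set \<Rightarrow> ('a \<times> 'a \<Rightarrow> bool) topology" where
  "lin_order_space D =
     subtopology (product_topology (\<lambda>_. discrete_topology UNIV) (D \<times> D)) (lin_orders D)"

definition pointwise_topology :: "'a set \<Rightarrow> ('a \<Rightarrow> 'a) set \<Rightarrow> ('a \<Rightarrow> 'a) topology" where
  "pointwise_topology D G = subtopology (product_topology (\<lambda>_. discrete_topology D) D) G"

definition order_action :: "'a set \<Rightarrow> ('a \<Rightarrow> 'a) \<Rightarrow> ('a \<times> 'a \<Rightarrow> bool) \<Rightarrow> 'a \<times> 'a \<Rightarrow> bool" where
  "order_action D g R = restrict (\<lambda>(a, b). R (inv_into D g a, inv_into D g b)) (D \<times> D)"

lemma lin_ordersI:
  assumes "R \<in> D \<times> D \<rightarrow>\<^sub>E UNIV" "\<And>a. a \<in> D \<Longrightarrow> \<not> R (a, a)"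
    and "\<And>a b. a \<in> D \<Longrightarrow> b \<in> D \<Longrightarrow> a \<noteq> b \<Longrightarrow> R (a, b) \<or> R (b, a)"
    and "\<And>a b c. a \<in> D \<Longrightarrow> b \<in> D \<Longrightarrow> c \<in> D \<Longrightarrow> R (a, b) \<Longrightarrow> R (b, c) \<Longrightarrow> R (a, c)"
  shows "R \<in> lin_orders D"
  using assms unfolding lin_orders_def by blast

lemma lin_orders_subset: "lin_orders D \<subseteq> D \<times> D \<rightarrow>\<^sub>E UNIV"
  unfolding lin_orders_def by (rule Collect_restrict)

lemma lin_ordersD:
  assumes "R \<in> lin_orders D" "a \<in> D" "b \<in> D" "c \<in> D"
  shows "\<not> R (a, a)" "a \<noteq> b \<Longrightarrow> R (a, b) \<or> R (b, a)" "R (a, b) \<Longrightarrow> R (b, c) \<Longrightarrow> R (a, c)"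
  using assms unfolding lin_orders_def by blast+

lemma closedin_lin_orders:
  "closedin (product_topology (\<lambda>_. discrete_topology UNIV) (D \<times> D)) (lin_orders D)"
proof -
  define P where "P = product_topology (\<lambda>_. discrete_topology (UNIV :: bool set)) (D \<times> D)"
  define C where "C k v = {R \<in> topspace P. R k = v}" for k v
  define S where "S a b c = {R \<in> topspace P. \<not> R (a, a) \<and> (a \<noteq> b \<longrightarrow> R (a, b) \<or> R (b, a)) \<and>
                                        (R (a, b) \<longrightarrow> R (b, c) \<longrightarrow> R (a, c))}" for a b c
  have C: "closedin P (C k v)" if "k \<in> D \<times> D" for k v
    using closedin_continuous_map_preimage[OF continuous_map_product_projection[OF that],
        of "\<lambda>_. discrete_topology UNIV" "{v}"]
    by (simp add: C_def P_def)
  have "S a b c = C (a, a) False \<inter> (if a = b then topspace P else C (a, b) True \<union> C (b, a) True)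
                   \<inter> (C (a, b) False \<union> C (b, c) False \<union> C (a, c) True)" for a b c
    by (auto simp: S_def C_def)
  then have "closedin P (S a b c)" if "a \<in> D" "b \<in> D" "c \<in> D" for a b c
    using that by (auto intro!: C)
  then have "closedin P (\<Inter> (insert (topspace P) ((\<lambda>(a, b, c). S a b c) ` (D \<times> D \<times> D))))"
    by (intro closedin_Inter) auto
  moreover have "\<Inter> (insert (topspace P) ((\<lambda>(a, b, c). S a b c) ` (D \<times> D \<times> D))) = lin_orders D"
  proof (intro set_eqI iffI)
    fix R assume R: "R \<in> \<Inter> (insert (topspace P) ((\<lambda>(a, b, c). S a b c) ` (D \<times> D \<times> D)))"
    have S: "\<not> R (a, a) \<and> (a \<noteq> b \<longrightarrow> R (a, b) \<or> R (b, a)) \<and> (R (a, b) \<longrightarrow> R (b, c) \<longrightarrow> R (a, c))"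
      if "a \<in> D" "b \<in> D" "c \<in> D" for a b c
    proof -
      have "R \<in> S a b c" using R that by (auto intro!: bexI[of _ "(a, b, c)"])
      then show ?thesis by (simp add: S_def)
    qed
    show "R \<in> lin_orders D"
    proof (rule lin_ordersI)
      show "R \<in> D \<times> D \<rightarrow>\<^sub>E UNIV" using R by (simp add: P_def)
    qed (use S in meson)+
  next
    fix R assume R: "R \<in> lin_orders D"
    then have "R \<in> D \<times> D \<rightarrow>\<^sub>E UNIV" using lin_orders_subset by blast
    then have "R \<in> topspace P" by (simp add: P_def)
    moreover have "R \<in> S a b c" if "a \<in> D" "b \<in> D" "c \<in> D" for a b c
      using lin_ordersD[OF R that] \<open>R \<in> topspace P\<close> unfolding S_def by blast
    ultimately show "R \<in> \<Inter> (insert (topspace P) ((\<lambda>(a, b, c). S a b c) ` (D \<times> D \<times> D)))"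
      by auto
  qed
  ultimately show ?thesis by (simp add: P_def)
qed

lemma compact_space_lin_order_space: "compact_space (lin_order_space D)"
  unfolding lin_order_space_def
  by (intro compact_space_subtopology closedin_compact_space closedin_lin_orders)
     (simp add: compact_space_product_topology compact_space_discrete_topology)

lemma Hausdorff_space_lin_order_space: "Hausdorff_space (lin_order_space D)"
  unfolding lin_order_space_def
  by (intro Hausdorff_space_subtopology) (simp add: Hausdorff_space_product_topology)

lemma topspace_lin_order_space: "topspace (lin_order_space D) = lin_orders D"
  unfolding lin_order_space_def by (simp add: Int_absorb1 lin_orders_subset)

lemma lin_orders_nonempty:
  assumes "countable D"
  shows "lin_orders D \<noteq> {}"
proof -
  have "restrict (\<lambda>(a, b). to_nat_on D a < to_nat_on D b) (D \<times> D) \<in> lin_orders D"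
    using inj_on_to_nat_on[OF assms] by (intro lin_ordersI) (auto, metis inj_onD linorder_neqE_nat)
  then show ?thesis by blast
qed

lemma topspace_pointwise_topology:
  "topspace (pointwise_topology D G) = (D \<rightarrow>\<^sub>E D) \<inter> G"
  by (simp add: pointwise_topology_def)

lemma order_action_undefined: "p \<notin> D \<times> D \<Longrightarrow> order_action D g R p = undefined"
  by (simp add: order_action_def)

lemma order_action_apply:
  "a \<in> D \<Longrightarrow> b \<in> D \<Longrightarrow> order_action D g R (a, b) = R (inv_into D g a, inv_into D g b)"
  by (simp add: order_action_def)

lemma order_action_lin_orders:
  assumes g: "bij_betw g D D" and R: "R \<in> lin_orders D"
  shows "order_action D g R \<in> lin_orders D"
proof (rule lin_ordersI)
  have inv: "bij_betw (inv_into D g) D D" using g by (rule bij_betw_inv_into)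
  note inv_mem = bij_betw_apply[OF inv]
  show "order_action D g R \<in> D \<times> D \<rightarrow>\<^sub>E UNIV" by (simp add: order_action_def)
  show "\<not> order_action D g R (a, a)" if "a \<in> D" for a
    using lin_ordersD(1)[OF R inv_mem inv_mem inv_mem] that by (simp add: order_action_apply)
  show "order_action D g R (a, b) \<or> order_action D g R (b, a)" if "a \<in> D" "b \<in> D" "a \<noteq> b" for a b
    using lin_ordersD(2)[OF R inv_mem[OF that(1)] inv_mem[OF that(2)] inv_mem[OF that(2)]]
      bij_betw_imp_inj_on[OF inv] that
    by (simp add: order_action_apply inj_on_eq_iff)
  show "order_action D g R (a, c)" if "a \<in> D" "b \<in> D" "c \<in> D" "order_action D g R (a, b)"
    "order_action D g R (b, c)" for a b c
    using lin_ordersD(3)[OF R inv_mem[OF that(1)] inv_mem[OF that(2)] inv_mem[OF that(3)]] that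
    by (simp add: order_action_apply)
qed

lemma inv_into_compose:
  assumes g: "bij_betw g D D" and h: "bij_betw h D D" and "a \<in> D"
  shows "inv_into D (compose D g h) a = inv_into D h (inv_into D g a)"
proof (rule inv_into_f_eq)
  show "inj_on (compose D g h) D"
    using bij_betw_compose[OF h g] by (rule bij_betw_imp_inj_on)
  have "inv_into D g a \<in> D"
    using bij_betw_apply[OF bij_betw_inv_into[OF g] \<open>a \<in> D\<close>] .
  then show "inv_into D h (inv_into D g a) \<in> D"
    and "compose D g h (inv_into D h (inv_into D g a)) = a"
    using g h \<open>a \<in> D\<close> bij_betw_apply[OF bij_betw_inv_into[OF h]]
    by (simp_all add: compose_eq bij_betw_inv_into_right)
qed

lemma order_action_id:
  assumes "R \<in> lin_orders D"
  shows "order_action D (restrict id D) R = R"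
proof
  fix p
  have inv: "inv_into D (restrict id D) a = a" if "a \<in> D" for a
    using that by (intro inv_into_f_eq) (simp_all add: inj_on_def)
  have R: "R \<in> extensional (D \<times> D)"
    using assms lin_orders_subset unfolding PiE_def by blast
  show "order_action D (restrict id D) R p = R p"
  proof (cases "p \<in> D \<times> D")
    case True
    then obtain a b where "p = (a, b)" "a \<in> D" "b \<in> D" by blast
    then show ?thesis by (simp add: order_action_apply inv)
  next
    case False
    then show ?thesis by (simp add: order_action_undefined extensional_arb[OF R])
  qed
qed

lemma order_action_compose:
  assumes g: "bij_betw g D D" and h: "bij_betw h D D"
  shows "order_action D (compose D g h) R = order_action D g (order_action D h R)"
proof (rule ext, clarify)
  fix a b
  show "order_action D (compose D g h) R (a, b) = order_action D g (order_action D h R) (a, b)"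
  proof (cases "a \<in> D \<and> b \<in> D")
    case True
    moreover have "inv_into D g a \<in> D" "inv_into D g b \<in> D"
      using True bij_betw_apply[OF bij_betw_inv_into[OF g]] by auto
    ultimately show ?thesis
      using g h by (simp add: order_action_def inv_into_compose)
  qed (simp add: order_action_undefined)
qed

lemma order_action_eq_iff:
  assumes g: "bij_betw g D D" and "a \<in> D" "b \<in> D"
  shows "order_action D g R (a, b) = y \<longleftrightarrow> (\<exists>c\<in>D. \<exists>d\<in>D. g c = a \<and> g d = b \<and> R (c, d) = y)"
proof
  assume "order_action D g R (a, b) = y"
  moreover have "inv_into D g a \<in> D" "inv_into D g b \<in> D"
    using assms bij_betw_apply[OF bij_betw_inv_into[OF g]] by auto
  ultimately show "\<exists>c\<in>D. \<exists>d\<in>D. g c = a \<and> g d = b \<and> R (c, d) = y"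
    using assms
    by (intro bexI[of _ "inv_into D g a"] bexI[of _ "inv_into D g b"])
       (auto simp: order_action_apply bij_betw_inv_into_right)
next
  assume "\<exists>c\<in>D. \<exists>d\<in>D. g c = a \<and> g d = b \<and> R (c, d) = y"
  then obtain c d where "c \<in> D" "d \<in> D" "g c = a" "g d = b" "R (c, d) = y" by blast
  moreover from this have "inv_into D g a = c" "inv_into D g b = d"
    using bij_betw_inv_into_left[OF g] by blast+
  ultimately show "order_action D g R (a, b) = y"
    using assms by (simp add: order_action_apply)
qed

lemma order_action_fixed_imp_preserving:
  assumes "bij_betw g D D" "order_action D g R = R" "a \<in> D" "b \<in> D"
  shows "R (g a, g b) = R (a, b)"
proof -
  have "R (g a, g b) = order_action D g R (g a, g b)" using assms(2) by simp
  also have "\<dots> = R (a, b)"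
    using assms(1,3,4) by (simp add: order_action_apply bij_betw_apply bij_betw_inv_into_left)
  finally show ?thesis .
qed

lemma continuous_map_into_discrete_UNIV:
  assumes "\<And>y. openin X {x \<in> topspace X. f x = y}"
  shows "continuous_map X (discrete_topology UNIV) f"
  unfolding continuous_map_def
proof (intro conjI allI impI)
  fix U
  have "openin X (\<Union>y\<in>U. {x \<in> topspace X. f x = y})"
    using assms by (intro openin_Union) auto
  moreover have "{x \<in> topspace X. f x \<in> U} = (\<Union>y\<in>U. {x \<in> topspace X. f x = y})"
    by blast
  ultimately show "openin X {x \<in> topspace X. f x \<in> U}"
    by simp
qed simp

lemma openin_evaluation_fibre:
  assumes "k \<in> I" "openin (Y k) {v}"
  shows "openin (subtopology (product_topology Y I) S)
           {f \<in> topspace (subtopology (product_topology Y I) S). f k = v}"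
proof -
  have "continuous_map (subtopology (product_topology Y I) S) (Y k) (\<lambda>f. f k)"
    by (rule continuous_map_from_subtopology[OF continuous_map_product_projection[OF assms(1)]])
  from openin_continuous_map_preimage[OF this assms(2)] show ?thesis by simp
qed

lemma openin_order_action_fibre:
  assumes G: "\<forall>g\<in>G. bij_betw g D D" and "a \<in> D" "b \<in> D"
  defines "Z \<equiv> prod_topology (pointwise_topology D G) (lin_order_space D)"
  shows "openin Z {z \<in> topspace Z. order_action D (fst z) (snd z) (a, b) = y}"
proof -
  define T where "T = pointwise_topology D G"
  define E where "E c d = ({g \<in> topspace T. g c = a} \<inter> {g \<in> topspace T. g d = b})
                            \<times> {R \<in> topspace (lin_order_space D). R (c, d) = y}" for c d
  have "openin Z (E c d)" if "c \<in> D" "d \<in> D" for c d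
    unfolding E_def Z_def T_def pointwise_topology_def lin_order_space_def openin_prod_Times_iff
    using \<open>a \<in> D\<close> \<open>b \<in> D\<close> that
    by (intro disjI2 conjI openin_Int openin_evaluation_fibre) auto
  moreover have "{z \<in> topspace Z. order_action D (fst z) (snd z) (a, b) = y} = (\<Union>c\<in>D. \<Union>d\<in>D. E c d)"
  proof (intro set_eqI)
    fix z :: "('a \<Rightarrow> 'a) \<times> ('a \<times> 'a \<Rightarrow> bool)"
    obtain g R where z: "z = (g, R)" by fastforce
    show "z \<in> {z \<in> topspace Z. order_action D (fst z) (snd z) (a, b) = y} \<longleftrightarrow> z \<in> (\<Union>c\<in>D. \<Union>d\<in>D. E c d)"
    proof (cases "g \<in> topspace T")
      case True
      then have "bij_betw g D D" using G by (simp add: T_def topspace_pointwise_topology)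
      from order_action_eq_iff[OF this \<open>a \<in> D\<close> \<open>b \<in> D\<close>, of R y] True show ?thesis
        by (simp add: z E_def Z_def T_def) blast
    qed (simp add: z E_def Z_def T_def)
  qed
  ultimately show ?thesis by auto
qed

lemma continuous_map_order_action:
  assumes G: "\<forall>g\<in>G. bij_betw g D D"
  shows "continuous_map (prod_topology (pointwise_topology D G) (lin_order_space D))
           (lin_order_space D) (\<lambda>(g, R). order_action D g R)"
proof -
  define Z where "Z = prod_topology (pointwise_topology D G) (lin_order_space D)"
  have "continuous_map Z (product_topology (\<lambda>_. discrete_topology UNIV) (D \<times> D))
          (\<lambda>(g, R). order_action D g R)"
    unfolding continuous_map_componentwise
  proof (intro conjI ballI)
    show "(\<lambda>(g, R). order_action D g R) ` topspace Z \<subseteq> extensional (D \<times> D)"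
      by (auto simp: order_action_def)
    fix k assume "k \<in> D \<times> D"
    then show "continuous_map Z (discrete_topology UNIV) (\<lambda>z. (case z of (g, R) \<Rightarrow> order_action D g R) k)"
      using openin_order_action_fibre[OF G] unfolding Z_def
      by (intro continuous_map_into_discrete_UNIV) (auto simp: case_prod_unfold)
  qed
  moreover have "(\<lambda>(g, R). order_action D g R) ` topspace Z \<subseteq> lin_orders D"
    using G by (auto simp: Z_def topspace_pointwise_topology topspace_lin_order_space order_action_lin_orders)
  ultimately show ?thesis
    by (simp add: Z_def lin_order_space_def continuous_map_in_subtopology image_subset_iff_funcset)
qed

lemma extremely_amenable_fixes_lin_order:
  fixes G :: "('a \<Rightarrow> 'a) set"
  assumes EA: "extremely_amenable G (compose D) (restrict id D) (pointwise_topology D G)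
                 TYPE('a \<times> 'a \<Rightarrow> bool)"
    and G: "\<forall>g\<in>G. bij_betw g D D" and "countable D"
  shows "\<exists>R\<in>lin_orders D. \<forall>g\<in>G. order_action D g R = R"
proof -
  have "compact_space (lin_order_space D) \<and> Hausdorff_space (lin_order_space D) \<and>
        topspace (lin_order_space D) \<noteq> {} \<and>
        continuous_map (prod_topology (pointwise_topology D G) (lin_order_space D)) (lin_order_space D)
          (\<lambda>(g, R). order_action D g R) \<and>
        (\<forall>R\<in>topspace (lin_order_space D). order_action D (restrict id D) R = R) \<and>
        (\<forall>g\<in>G. \<forall>h\<in>G. \<forall>R\<in>topspace (lin_order_space D).
           order_action D (compose D g h) R = order_action D g (order_action D h R))"
  proof (intro conjI ballI)
    show "topspace (lin_order_space D) \<noteq> {}"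
      using lin_orders_nonempty[OF \<open>countable D\<close>] by (simp add: topspace_lin_order_space)
    show "order_action D (restrict id D) R = R" if "R \<in> topspace (lin_order_space D)" for R
      using that by (simp add: topspace_lin_order_space order_action_id)
    show "order_action D (compose D g h) R = order_action D g (order_action D h R)"
      if "g \<in> G" "h \<in> G" for g h R
      using G that by (simp add: order_action_compose)
  qed (simp_all add: compact_space_lin_order_space Hausdorff_space_lin_order_space
                     continuous_map_order_action G)
  from EA[unfolded extremely_amenable_def, rule_format, OF this] show ?thesis
    by (simp add: topspace_lin_order_space)
qed

lemma transitive_relation_along_orbit:
  assumes trans: "\<And>a b c. a \<in> D \<Longrightarrow> b \<in> D \<Longrightarrow> c \<in> D \<Longrightarrow> Q a b \<Longrightarrow> Q b c \<Longrightarrow> Q a c"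
    and mono: "\<And>a b. a \<in> D \<Longrightarrow> b \<in> D \<Longrightarrow> Q a b \<Longrightarrow> Q (g a) (g b)"
    and gD: "g ` D \<subseteq> D" and "x \<in> D" and "Q x (g x)"
  shows "Q x ((g ^^ Suc k) x)"
proof -
  have orbit: "(g ^^ k) x \<in> D" for k
    using gD \<open>x \<in> D\<close> by (induction k) auto
  have step: "Q ((g ^^ k) x) ((g ^^ Suc k) x)" for k
  proof (induction k)
    case (Suc k)
    then show ?case using mono[OF orbit orbit Suc.IH] by simp
  qed (use \<open>Q x (g x)\<close> in simp)
  show ?thesis
  proof (induction k)
    case (Suc k)
    then show ?case using trans[OF \<open>x \<in> D\<close> orbit orbit] step by blast
  qed (use \<open>Q x (g x)\<close> in simp)
qed

lemma lin_order_preserving_periodic_point: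
  assumes R: "R \<in> lin_orders D" and gD: "g ` D \<subseteq> D"
    and mono: "\<And>a b. a \<in> D \<Longrightarrow> b \<in> D \<Longrightarrow> R (a, b) \<Longrightarrow> R (g a, g b)"
    and "x \<in> D" and periodic: "(g ^^ N) x = x" and "N > 0"
  shows "g x = x"
proof (rule ccontr)
  have N: "(g ^^ Suc (N - 1)) x = x" using periodic \<open>N > 0\<close> by simp
  have gx: "g x \<in> D" using gD \<open>x \<in> D\<close> by blast
  assume "g x \<noteq> x"
  then consider "R (x, g x)" | "R (g x, x)"
    using lin_ordersD(2)[OF R \<open>x \<in> D\<close> gx gx] by metis
  then have "R (x, x)"
  proof cases
    case 1
    have "R (x, (g ^^ Suc (N - 1)) x)"
    proof (rule transitive_relation_along_orbit[where Q = "\<lambda>a b. R (a, b)", OF _ mono gD \<open>x \<in> D\<close> 1])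
      show "R (a, c)" if "a \<in> D" "b \<in> D" "c \<in> D" "R (a, b)" "R (b, c)" for a b c
        using lin_ordersD(3)[OF R that(1-3) that(4,5)] .
    qed
    then show ?thesis using N by simp
  next
    case 2
    have "R ((g ^^ Suc (N - 1)) x, x)"
    proof (rule transitive_relation_along_orbit[where Q = "\<lambda>a b. R (b, a)", OF _ _ gD \<open>x \<in> D\<close> 2])
      show "R (c, a)" if "a \<in> D" "b \<in> D" "c \<in> D" "R (b, a)" "R (c, b)" for a b c
        using lin_ordersD(3)[OF R that(3,2,1) that(5,4)] .
      show "R (g b, g a)" if "a \<in> D" "b \<in> D" "R (b, a)" for a b
        using mono[OF that(2,1,3)] .
    qed
    then show ?thesis using N by simp
  qed
  then show False using lin_ordersD(1)[OF R \<open>x \<in> D\<close> \<open>x \<in> D\<close> \<open>x \<in> D\<close>] by contradiction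
qed

lemma extremely_amenable_periodic_point_fixed:
  fixes G :: "('a \<Rightarrow> 'a) set"
  assumes EA: "extremely_amenable G (compose D) (restrict id D) (pointwise_topology D G)
                 TYPE('a \<times> 'a \<Rightarrow> bool)"
    and G: "\<forall>g\<in>G. bij_betw g D D" and "countable D"
    and "g \<in> G" "x \<in> D" "(g ^^ N) x = x" "N > 0"
  shows "g x = x"
proof -
  obtain R where R: "R \<in> lin_orders D" and fixed: "\<forall>g\<in>G. order_action D g R = R"
    using extremely_amenable_fixes_lin_order[OF EA G \<open>countable D\<close>] by blast
  have g: "bij_betw g D D" using G \<open>g \<in> G\<close> by blast
  show ?thesis
  proof (rule lin_order_preserving_periodic_point[OF R])
    show "g ` D \<subseteq> D" using g by (simp add: bij_betw_def)
    show "R (g a, g b)" if "a \<in> D" "b \<in> D" "R (a, b)" for a b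
      using order_action_fixed_imp_preserving[OF g _ that(1,2)] fixed \<open>g \<in> G\<close> that(3) by blast
  qed (use assms in auto)
qed

section \<open>Back and forth\<close>

lemma pairwise_UN_incseq:
  assumes "incseq A" "\<And>k. pairwise R (A k)"
  shows "pairwise R (\<Union>k. A k)"
proof (rule pairwise_chain_Union)
  show "chain\<^sub>\<subseteq> (range A)"
    using \<open>incseq A\<close> unfolding chain_subset_def by (metis imageE incseqD nat_le_linear)
qed (use assms in auto)

lemma back_and_forth:
  fixes C :: "'a \<times> 'b \<Rightarrow> 'a \<times> 'b \<Rightarrow> bool"
  assumes "countable A" "countable B" "A \<noteq> {}" "B \<noteq> {}"
    and extend_domain: "\<And>P a. finite P \<Longrightarrow> P \<subseteq> A \<times> B \<Longrightarrow> pairwise C P \<Longrightarrow> a \<in> A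
                  \<Longrightarrow> \<exists>b\<in>B. pairwise C (insert (a, b) P)"
    and extend_range: "\<And>P b. finite P \<Longrightarrow> P \<subseteq> A \<times> B \<Longrightarrow> pairwise C P \<Longrightarrow> b \<in> B
                  \<Longrightarrow> \<exists>a\<in>A. pairwise C (insert (a, b) P)"
    and P0: "finite P0" "P0 \<subseteq> A \<times> B" "pairwise C P0"
  shows "\<exists>P. P0 \<subseteq> P \<and> P \<subseteq> A \<times> B \<and> pairwise C P \<and> fst ` P = A \<and> snd ` P = B"
proof -
  define good where "good P \<longleftrightarrow> finite P \<and> P \<subseteq> A \<times> B \<and> pairwise C P" for P
  obtain fb where fb: "\<And>P a. good P \<Longrightarrow> a \<in> A \<Longrightarrow> good (insert (a, fb P a) P)"
    using extend_domain unfolding good_def by (metis finite_insert insert_subset mem_Sigma_iff)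
  obtain fa where fa: "\<And>P b. good P \<Longrightarrow> b \<in> B \<Longrightarrow> good (insert (fa P b, b) P)"
    using extend_range unfolding good_def by (metis finite_insert insert_subset mem_Sigma_iff)
  define a where "a = from_nat_into A"
  define b where "b = from_nat_into B"
  define step where "step k P = (let P' = insert (a k, fb P (a k)) P in insert (fa P' (b k), b k) P')"
    for k P
  define Ps where "Ps = rec_nat P0 step"
  have Ps_Suc: "Ps (Suc k) = step k (Ps k)" for k
    by (simp add: Ps_def)
  have good: "good (Ps k)" for k
  proof (induction k)
    case 0 then show ?case using P0 by (simp add: Ps_def good_def)
  next
    case (Suc k) then show ?case
      using fa fb from_nat_into[OF \<open>A \<noteq> {}\<close>] from_nat_into[OF \<open>B \<noteq> {}\<close>]
      by (simp add: Ps_Suc step_def a_def b_def Let_def)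
  qed
  have "incseq Ps"
    by (rule incseq_SucI) (auto simp: Ps_Suc step_def Let_def)
  define P where "P = (\<Union>k. Ps k)"
  have "(a k, fb (Ps k) (a k)) \<in> Ps (Suc k)"
    "(fa (insert (a k, fb (Ps k) (a k)) (Ps k)) (b k), b k) \<in> Ps (Suc k)" for k
    by (simp_all add: Ps_Suc step_def Let_def)
  then have covered: "(a k, fb (Ps k) (a k)) \<in> P"
    "(fa (insert (a k, fb (Ps k) (a k)) (Ps k)) (b k), b k) \<in> P" for k
    unfolding P_def by blast+
  have "Ps 0 = P0" by (simp add: Ps_def)
  then have "P0 \<subseteq> P" unfolding P_def by blast
  moreover have "pairwise C P"
    unfolding P_def using \<open>incseq Ps\<close> good by (intro pairwise_UN_incseq) (auto simp: good_def)
  moreover have "P \<subseteq> A \<times> B"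
    using good by (auto simp: P_def good_def)
  moreover have "A \<subseteq> fst ` P" "B \<subseteq> snd ` P"
    using covered from_nat_into_surj[OF \<open>countable A\<close>] from_nat_into_surj[OF \<open>countable B\<close>]
    unfolding a_def b_def by (metis fst_conv snd_conv image_eqI subsetI)+
  moreover from \<open>P \<subseteq> A \<times> B\<close> have "fst ` P \<subseteq> A" "snd ` P \<subseteq> B" by auto
  ultimately show ?thesis
    by (intro exI[of _ P]) blast
qed

section \<open>Twisted partial isomorphisms of D_n\<close>

text \<open>Since on D the product order means that all
  coordinates are strictly smaller, a bijection of D with twisted graph is an automorphism.\<close>

definition twisted :: "('n \<Rightarrow> 'n) \<Rightarrow> (rat^'n) \<times> (rat^'n) \<Rightarrow> (rat^'n) \<times> (rat^'n) \<Rightarrow> bool" where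
  "twisted \<sigma> p q \<longleftrightarrow> (\<forall>i. fst p $ i < fst q $ i \<longleftrightarrow> snd p $ \<sigma> i < snd q $ \<sigma> i)"

lemma finite_sets_separated:
  fixes S T :: "'a :: {linorder, no_bot, no_top} set"
  assumes "finite S" "finite T" "\<forall>s\<in>S. \<forall>t\<in>T. s < t"
  shows "\<exists>l h. l < h \<and> (\<forall>s\<in>S. s \<le> l) \<and> (\<forall>t\<in>T. h \<le> t)"
proof (cases "S = {}")
  case True
  obtain h where "\<forall>t\<in>T. h \<le> t"
    using \<open>finite T\<close> by (cases "T = {}") (auto intro: Min_le)
  moreover obtain l where "l < h" using lt_ex by blast
  ultimately show ?thesis using True by blast
next
  case False
  obtain h where "Max S < h" "\<forall>t\<in>T. h \<le> t"
  proof (cases "T = {}")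
    case True
    then show ?thesis using that gt_ex by blast
  next
    case False
    then show ?thesis
      using that assms \<open>S \<noteq> {}\<close> by (meson Max_in Min_in Min_le)
  qed
  then show ?thesis
    using \<open>finite S\<close> by (intro exI[of _ "Max S"] exI[of _ h]) auto
qed

lemma dense_in_Qn_between:
  fixes D :: "(rat^'n) set"
  assumes dense: "dense_in_Qn D" and "\<And>j. finite (S j)" "\<And>j. finite (T j)"
    and "\<And>j. \<forall>s\<in>S j. \<forall>t\<in>T j. s < t"
  shows "\<exists>b\<in>D. \<forall>j. (\<forall>s\<in>S j. s < b $ j) \<and> (\<forall>t\<in>T j. b $ j < t)"
proof -
  obtain l h where lh: "\<And>j. l j < h j" "\<And>j s. s \<in> S j \<Longrightarrow> s \<le> l j"
    "\<And>j t. t \<in> T j \<Longrightarrow> h j \<le> t"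
    using finite_sets_separated[OF assms(2-4)] by metis
  have "\<forall>j. (\<chi> j. l j) $ j < (\<chi> j. h j) $ j" using lh(1) by simp
  then obtain b where "b \<in> D" and "\<forall>j. (\<chi> j. l j) $ j < b $ j \<and> b $ j < (\<chi> j. h j) $ j"
    using dense unfolding dense_in_Qn_def by blast
  then have "l j < b $ j" "b $ j < h j" for j by simp_all
  show ?thesis
  proof (intro bexI[OF _ \<open>b \<in> D\<close>] allI conjI ballI)
    show "s < b $ j" if "s \<in> S j" for j s using lh(2)[OF that] \<open>l j < b $ j\<close> by simp
    show "b $ j < t" if "t \<in> T j" for j t using lh(3)[OF that] \<open>b $ j < h j\<close> by simp
  qed
qed

lemma twisted_extend_domain:
  fixes D :: "(rat^'n) set"
  assumes dense: "dense_in_Qn D" and ncc: "no_common_coord D" and "bij \<sigma>"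
    and "finite P" "P \<subseteq> D \<times> D" and tw: "pairwise (twisted \<sigma>) P" and "a \<in> D"
  shows "\<exists>b\<in>D. pairwise (twisted \<sigma>) (insert (a, b) P)"
proof (cases "a \<in> fst ` P")
  case True
  then obtain b where "(a, b) \<in> P" by force
  moreover from this have "b \<in> D" using \<open>P \<subseteq> D \<times> D\<close> by blast
  ultimately show ?thesis using tw by (metis insert_absorb)
next
  case False
  have inv: "inv \<sigma> (\<sigma> i) = i" for i using \<open>bij \<sigma>\<close> by (simp add: bij_is_inj)
  define S where "S j = (\<lambda>p. snd p $ j) ` {p \<in> P. fst p $ inv \<sigma> j < a $ inv \<sigma> j}" for j
  define T where "T j = (\<lambda>p. snd p $ j) ` {p \<in> P. a $ inv \<sigma> j < fst p $ inv \<sigma> j}" for j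
  have fin: "finite (S j)" "finite (T j)" for j
    using \<open>finite P\<close> by (simp_all add: S_def T_def)
  have sep: "\<forall>s\<in>S j. \<forall>t\<in>T j. s < t" for j
  proof -
    have "snd p $ j < snd q $ j"
      if "p \<in> P" "q \<in> P" "fst p $ inv \<sigma> j < a $ inv \<sigma> j" "a $ inv \<sigma> j < fst q $ inv \<sigma> j" for p q
    proof -
      from that have "p \<noteq> q" "fst p $ inv \<sigma> j < fst q $ inv \<sigma> j" by auto
      with tw that \<open>bij \<sigma>\<close> show ?thesis by (auto simp: pairwise_def twisted_def bij_is_surj surj_f_inv_f)
    qed
    then show ?thesis by (auto simp: S_def T_def)
  qed
  then obtain b where "b \<in> D" and b: "\<And>j. (\<forall>s\<in>S j. s < b $ j) \<and> (\<forall>t\<in>T j. b $ j < t)"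
    using dense_in_Qn_between[OF dense, of S T, OF fin(1) fin(2) sep] by blast
  have between: "fst p $ i < a $ i \<and> snd p $ \<sigma> i < b $ \<sigma> i \<or> a $ i < fst p $ i \<and> b $ \<sigma> i < snd p $ \<sigma> i"
    if "p \<in> P" for p i
  proof -
    have "fst p \<noteq> a" using False that by force
    then have "fst p $ i \<noteq> a $ i"
      using ncc \<open>P \<subseteq> D \<times> D\<close> that \<open>a \<in> D\<close> unfolding no_common_coord_def by force
    then show ?thesis
      using b[of "\<sigma> i"] that by (cases p) (auto simp: S_def T_def inv neq_iff)
  qed
  have "twisted \<sigma> (a, b) p \<and> twisted \<sigma> p (a, b)" if "p \<in> P" for p
    unfolding twisted_def fst_conv snd_conv using between[OF that] by (meson less_asym)
  then have "pairwise (twisted \<sigma>) (insert (a, b) P)"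
    using tw by (simp add: pairwise_insert)
  with \<open>b \<in> D\<close> show ?thesis by blast
qed

lemma twisted_swap:
  assumes "bij \<sigma>"
  shows "twisted (inv \<sigma>) (prod.swap p) (prod.swap q) \<longleftrightarrow> twisted \<sigma> p q"
  unfolding twisted_def fst_swap snd_swap
proof
  assume swapped: "\<forall>j. snd p $ j < snd q $ j \<longleftrightarrow> fst p $ inv \<sigma> j < fst q $ inv \<sigma> j"
  show "\<forall>i. fst p $ i < fst q $ i \<longleftrightarrow> snd p $ \<sigma> i < snd q $ \<sigma> i"
  proof
    fix i
    show "fst p $ i < fst q $ i \<longleftrightarrow> snd p $ \<sigma> i < snd q $ \<sigma> i"
      using swapped[rule_format, of "\<sigma> i"] assms by (simp add: bij_is_inj)
  qed
next
  assume "\<forall>i. fst p $ i < fst q $ i \<longleftrightarrow> snd p $ \<sigma> i < snd q $ \<sigma> i"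
  then show "\<forall>j. snd p $ j < snd q $ j \<longleftrightarrow> fst p $ inv \<sigma> j < fst q $ inv \<sigma> j"
    using assms by (metis bij_inv_eq_iff)
qed

lemma pairwise_twisted_swap:
  assumes "bij \<sigma>"
  shows "pairwise (twisted (inv \<sigma>)) (prod.swap ` P) \<longleftrightarrow> pairwise (twisted \<sigma>) P"
  by (simp add: pairwise_image pairwise_def twisted_swap[OF assms] inj_eq[OF bij_is_inj[OF bij_swap]])

lemma twisted_extend_range:
  fixes D :: "(rat^'n) set"
  assumes dense: "dense_in_Qn D" and ncc: "no_common_coord D" and "bij \<sigma>"
    and "finite P" "P \<subseteq> D \<times> D" and "pairwise (twisted \<sigma>) P" and "b \<in> D"
  shows "\<exists>a\<in>D. pairwise (twisted \<sigma>) (insert (a, b) P)"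
proof -
  have "bij (inv \<sigma>)" using \<open>bij \<sigma>\<close> by (rule bij_imp_bij_inv)
  moreover have "prod.swap ` P \<subseteq> D \<times> D" using \<open>P \<subseteq> D \<times> D\<close> by auto
  moreover have "pairwise (twisted (inv \<sigma>)) (prod.swap ` P)"
    using \<open>pairwise (twisted \<sigma>) P\<close> pairwise_twisted_swap[OF \<open>bij \<sigma>\<close>] by simp
  ultimately have "\<exists>a\<in>D. pairwise (twisted (inv \<sigma>)) (insert (b, a) (prod.swap ` P))"
    using finite_imageI[OF \<open>finite P\<close>] \<open>b \<in> D\<close> by (intro twisted_extend_domain[OF dense ncc])
  then obtain a where "a \<in> D" and "pairwise (twisted (inv \<sigma>)) (prod.swap ` insert (a, b) P)"
    by auto
  then show ?thesis
    using pairwise_twisted_swap[OF \<open>bij \<sigma>\<close>] by blast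
qed

lemma no_common_coord_eq:
  "no_common_coord D \<Longrightarrow> x \<in> D \<Longrightarrow> y \<in> D \<Longrightarrow> x $ i = y $ i \<Longrightarrow> x = y"
  unfolding no_common_coord_def by blast

lemma prod_less_no_common_coord:
  assumes "no_common_coord D" "x \<in> D" "y \<in> D" "x \<noteq> y"
  shows "prod_less x y \<longleftrightarrow> (\<forall>i. x $ i < y $ i)"
  using no_common_coord_eq[OF assms(1-3)] assms(4) unfolding prod_less_def
  by (metis order.strict_iff_order)

lemma twisted_fst_eq_iff_snd_eq:
  fixes D :: "(rat^'n) set"
  assumes ncc: "no_common_coord D" and "P \<subseteq> D \<times> D" and tw: "pairwise (twisted \<sigma>) P"
    and "p \<in> P" "q \<in> P"
  shows "fst p = fst q \<longleftrightarrow> snd p = snd q"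
proof (cases "p = q")
  case False
  obtain i :: 'n where True by blast
  have "fst p $ i < fst q $ i \<longleftrightarrow> snd p $ \<sigma> i < snd q $ \<sigma> i"
       "fst q $ i < fst p $ i \<longleftrightarrow> snd q $ \<sigma> i < snd p $ \<sigma> i"
    using tw False \<open>p \<in> P\<close> \<open>q \<in> P\<close> by (auto simp: pairwise_def twisted_def)
  moreover have "fst p \<in> D" "fst q \<in> D" "snd p \<in> D" "snd q \<in> D"
    using \<open>P \<subseteq> D \<times> D\<close> \<open>p \<in> P\<close> \<open>q \<in> P\<close> by auto
  ultimately show ?thesis
    using no_common_coord_eq[OF ncc] by (metis less_irrefl linorder_cases)
qed simp

lemma twisted_all_less_iff:
  assumes "bij \<sigma>" "twisted \<sigma> p q"
  shows "(\<forall>i. fst p $ i < fst q $ i) \<longleftrightarrow> (\<forall>j. snd p $ j < snd q $ j)"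
  using assms unfolding twisted_def by (metis bij_pointE)

lemma twisted_prod_less_iff:
  fixes D :: "(rat^'n) set"
  assumes ncc: "no_common_coord D" and "bij \<sigma>" and "x \<in> D" "y \<in> D" "x' \<in> D" "y' \<in> D"
    and "x \<noteq> y" "x' \<noteq> y'" and "twisted \<sigma> (x, x') (y, y')"
  shows "prod_less x y \<longleftrightarrow> prod_less x' y'"
  using prod_less_no_common_coord[OF ncc] twisted_all_less_iff[OF \<open>bij \<sigma>\<close> \<open>twisted \<sigma> (x, x') (y, y')\<close>]
    assms(3-8) by simp

lemma twisted_graph_in_Aut_D:
  fixes D :: "(rat^'n) set"
  assumes ncc: "no_common_coord D" and "bij \<sigma>" and PD: "P \<subseteq> D \<times> D"
    and tw: "pairwise (twisted \<sigma>) P" and dom: "fst ` P = D" and ran: "snd ` P = D"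
  shows "\<exists>g\<in>Aut_D D. \<forall>(a, b)\<in>P. g a = b"
proof -
  define g where "g = restrict (\<lambda>a. SOME b. (a, b) \<in> P) D"
  have graph: "(a, g a) \<in> P" if "a \<in> D" for a
  proof -
    obtain b where "(a, b) \<in> P" using dom \<open>a \<in> D\<close> by force
    then show ?thesis using \<open>a \<in> D\<close> someI[of "\<lambda>b. (a, b) \<in> P" b] by (simp add: g_def)
  qed
  have unique: "fst p = fst q \<longleftrightarrow> snd p = snd q" if "p \<in> P" "q \<in> P" for p q
    using twisted_fst_eq_iff_snd_eq[OF ncc PD tw that] .
  have g_eq: "g a = b" if "(a, b) \<in> P" for a b
    using unique[OF graph that] that PD by auto
  have gD: "g a \<in> D" if "a \<in> D" for a
    using graph[OF that] PD by blast
  have inj: "inj_on g D"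
  proof (rule inj_onI)
    fix a a' assume "a \<in> D" "a' \<in> D" "g a = g a'"
    then show "a = a'" using unique[OF graph[OF \<open>a \<in> D\<close>] graph[OF \<open>a' \<in> D\<close>]] by simp
  qed
  have "g ` D = D"
  proof
    show "g ` D \<subseteq> D" using gD by blast
    show "D \<subseteq> g ` D"
    proof
      fix b assume "b \<in> D"
      then obtain a where "(a, b) \<in> P" using ran by force
      then show "b \<in> g ` D" using g_eq PD by force
    qed
  qed
  have "prod_less x y \<longleftrightarrow> prod_less (g x) (g y)" if "x \<in> D" "y \<in> D" for x y
  proof (cases "x = y")
    case False
    have "twisted \<sigma> (x, g x) (y, g y)"
      using tw graph[OF that(1)] graph[OF that(2)] False by (auto simp: pairwise_def)
    moreover have "g x \<noteq> g y" using inj that False by (meson inj_on_eq_iff)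
    ultimately show ?thesis
      using twisted_prod_less_iff[OF ncc \<open>bij \<sigma>\<close>] that gD False by blast
  qed (simp add: prod_less_def)
  moreover have "g \<in> D \<rightarrow>\<^sub>E D"
    using gD by (simp add: g_def)
  moreover have "bij_betw g D D"
    using inj \<open>g ` D = D\<close> by (simp add: bij_betw_def)
  ultimately have "g \<in> Aut_D D"
    by (simp add: Aut_D_def)
  then show ?thesis
    using g_eq by blast
qed

lemma countable_rat_vec: "countable (A :: (rat^'n) set)"
proof (rule countable_subset)
  show "A \<subseteq> range (vec_lambda :: ('n \<Rightarrow> rat) \<Rightarrow> rat^'n)"
    by (metis rangeI subsetI vec_lambda_eta)
qed simp

lemma dense_in_Qn_nonempty:
  fixes D :: "(rat^'n) set"
  assumes "dense_in_Qn D"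
  shows "D \<noteq> {}"
proof -
  have "\<forall>i. (\<chi> i. (0::rat)) $ i < (\<chi> i. 1) $ i" by simp
  then show ?thesis using assms unfolding dense_in_Qn_def by blast
qed

lemma twisted_extends_to_Aut_D:
  fixes D :: "(rat^'n) set"
  assumes dense: "dense_in_Qn D" and ncc: "no_common_coord D" and "bij \<sigma>"
    and "finite P0" "P0 \<subseteq> D \<times> D" "pairwise (twisted \<sigma>) P0"
  shows "\<exists>g\<in>Aut_D D. \<forall>(a, b)\<in>P0. g a = b"
proof -
  have "\<exists>P. P0 \<subseteq> P \<and> P \<subseteq> D \<times> D \<and> pairwise (twisted \<sigma>) P \<and> fst ` P = D \<and> snd ` P = D"
    using dense_in_Qn_nonempty[OF dense] assms(4-6)
    by (intro back_and_forth[where C = "twisted \<sigma>", OF countable_rat_vec countable_rat_vec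
          _ _ twisted_extend_domain[OF dense ncc \<open>bij \<sigma>\<close>] twisted_extend_range[OF dense ncc \<open>bij \<sigma>\<close>]])
  then obtain P where "P0 \<subseteq> P" and "P \<subseteq> D \<times> D" "pairwise (twisted \<sigma>) P" "fst ` P = D" "snd ` P = D"
    by blast
  moreover from twisted_graph_in_Aut_D[OF ncc \<open>bij \<sigma>\<close> this(2-)]
  obtain g where "g \<in> Aut_D D" "\<forall>(a, b)\<in>P. g a = b" by blast
  ultimately show ?thesis by (intro bexI[of _ g]) auto
qed

section \<open>An automorphism of D_n with a periodic point\<close>

lemma Suc_mod_inj:
  fixes a b N :: nat
  assumes "a < N" "b < N" "Suc a mod N = Suc b mod N"
  shows "a = b"
  using assms by (auto simp: mod_Suc split: if_splits)

lemma cyclic_permutation: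
  "\<exists>(\<sigma> :: 'n :: finite \<Rightarrow> 'n) idx. bij \<sigma> \<and> bij_betw idx UNIV {..<CARD('n)} \<and>
     (\<forall>i. idx (\<sigma> i) = Suc (idx i) mod CARD('n))"
proof -
  define N where "N = CARD('n)"
  obtain idx :: "'n \<Rightarrow> nat" where idx: "bij_betw idx UNIV {..<N}"
    using ex_bij_betw_finite_nat[of "UNIV :: 'n set"] by (auto simp: N_def atLeast0LessThan)
  define \<sigma> where "\<sigma> i = inv_into UNIV idx (Suc (idx i) mod N)" for i
  have "N > 0" by (simp add: N_def)
  then have idx_\<sigma>: "idx (\<sigma> i) = Suc (idx i) mod N" for i
    using bij_betw_inv_into_right[OF idx] by (simp add: \<sigma>_def)
  have "inj \<sigma>"
  proof (rule injI)
    fix i i' assume "\<sigma> i = \<sigma> i'"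
    then have "Suc (idx i) mod N = Suc (idx i') mod N" by (metis idx_\<sigma>)
    then have "idx i = idx i'"
      using Suc_mod_inj bij_betwE[OF idx] by blast
    then show "i = i'" using bij_betw_imp_inj_on[OF idx] by (simp add: inj_eq)
  qed
  then have "bij \<sigma>" by (simp add: bij_def finite_UNIV_inj_surj)
  with idx idx_\<sigma> show ?thesis unfolding N_def by blast
qed

lemma floor_less_iff_if_floor_neq:
  fixes u v :: "'a :: floor_ceiling"
  assumes "\<lfloor>u\<rfloor> \<noteq> \<lfloor>v\<rfloor>"
  shows "u < v \<longleftrightarrow> \<lfloor>u\<rfloor> < \<lfloor>v\<rfloor>"
  using assms floor_less_cancel floor_mono by (metis less_le not_le)

lemma funpow_cycle:
  assumes "0 < N" "\<forall>j<N. g (x j) = x (Suc j mod N)"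
  shows "(g ^^ k) (x 0) = x (k mod N)"
proof (induction k)
  case (Suc k)
  then show ?case using assms by (simp add: mod_Suc_eq)
qed simp

lemma dense_in_Qn_floor:
  fixes D :: "(rat^'n) set"
  assumes "dense_in_Qn D"
  shows "\<exists>d\<in>D. \<forall>i. \<lfloor>d $ i\<rfloor> = c i"
proof -
  have "\<forall>i. (\<chi> i. (of_int (c i) :: rat)) $ i < (\<chi> i. of_int (c i) + 1) $ i" by simp
  then obtain d where "d \<in> D" "\<forall>i. of_int (c i) < d $ i \<and> d $ i < of_int (c i) + 1"
    using assms unfolding dense_in_Qn_def by fastforce
  then show ?thesis by (metis floor_unique less_le)
qed

lemma twisted_cycle_extends_to_Aut_D:
  fixes D :: "(rat^'n) set"
  assumes dense: "dense_in_Qn D" and ncc: "no_common_coord D" and "bij \<sigma>"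
    and xD: "\<And>j. j < N \<Longrightarrow> x j \<in> D"
    and tw: "\<And>j l. j < N \<Longrightarrow> l < N \<Longrightarrow> j \<noteq> l \<Longrightarrow>
               twisted \<sigma> (x j, x (Suc j mod N)) (x l, x (Suc l mod N))"
  shows "\<exists>g\<in>Aut_D D. \<forall>j<N. g (x j) = x (Suc j mod N)"
proof -
  define P0 where "P0 = (\<lambda>j. (x j, x (Suc j mod N))) ` {..<N}"
  have "pairwise (twisted \<sigma>) P0"
  proof (rule pairwiseI)
    fix p q assume "p \<in> P0" "q \<in> P0" "p \<noteq> q"
    then obtain j l where "j < N" "l < N" "p = (x j, x (Suc j mod N))" "q = (x l, x (Suc l mod N))"
      by (auto simp: P0_def)
    moreover from this have "j \<noteq> l" using \<open>p \<noteq> q\<close> by blast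
    ultimately show "twisted \<sigma> p q" by (simp add: tw)
  qed
  moreover have "P0 \<subseteq> D \<times> D" using xD by (auto simp: P0_def)
  moreover have "finite P0" by (simp add: P0_def)
  ultimately obtain g where "g \<in> Aut_D D" and "\<forall>(a, b)\<in>P0. g a = b"
    using twisted_extends_to_Aut_D[OF dense ncc \<open>bij \<sigma>\<close>] by blast
  then show ?thesis by (auto simp: P0_def)
qed

lemma Aut_D_cycle:
  fixes D :: "(rat^'n) set"
  assumes "CARD('n) \<ge> 2" and dense: "dense_in_Qn D" and ncc: "no_common_coord D"
  shows "\<exists>g\<in>Aut_D D. \<exists>x. (\<forall>j<CARD('n). x j \<in> D \<and> g (x j) = x (Suc j mod CARD('n))) \<and> x 0 \<noteq> x 1"
proof -
  define N where "N = CARD('n)"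
  obtain \<sigma> :: "'n \<Rightarrow> 'n" and idx where "bij \<sigma>" and idx: "bij_betw idx UNIV {..<N}"
    and idx_\<sigma>: "\<And>i. idx (\<sigma> i) = Suc (idx i) mod N"
    using cyclic_permutation unfolding N_def by blast
  \<comment> \<open>x j is chosen with integer part c j i in coordinate i; shifting j by one and i by \<sigma>
    leaves c unchanged, so the cycle x 0 \<mapsto> x 1 \<mapsto> \<dots> \<mapsto> x (N - 1) \<mapsto> x 0 is twisted.\<close>
  define c where "c j i = (int j - int (idx i)) mod int N" for j i
  have c_shift: "c (Suc j mod N) (\<sigma> i) = c j i" for j i
  proof -
    have "c (Suc j mod N) (\<sigma> i) = (int (Suc j) mod int N - int (Suc (idx i)) mod int N) mod int N"
      unfolding c_def idx_\<sigma> by (simp add: of_nat_mod)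
    also have "\<dots> = c j i" unfolding c_def by (simp add: mod_diff_eq)
    finally show ?thesis .
  qed
  have c_inj: "j = l" if "j < N" "l < N" "c j i = c l i" for j l i
  proof -
    have "(int j - int (idx i) + int (idx i)) mod int N = (int l - int (idx i) + int (idx i)) mod int N"
      using that(3) unfolding c_def by (rule mod_add_cong) (rule refl)
    then show ?thesis using that(1,2) by (simp add: zmod_int[symmetric])
  qed
  obtain x where xD: "\<And>j. x j \<in> D" and x_floor: "\<And>j i. \<lfloor>x j $ i\<rfloor> = c j i"
    using dense_in_Qn_floor[OF dense, of "c _"] by metis
  have x_less: "x j $ i < x l $ i \<longleftrightarrow> c j i < c l i" if "j < N" "l < N" "j \<noteq> l" for j l i
    using floor_less_iff_if_floor_neq[of "x j $ i" "x l $ i"] c_inj[of j l i] that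
    by (simp add: x_floor) blast
  have "twisted \<sigma> (x j, x (Suc j mod N)) (x l, x (Suc l mod N))"
    if "j < N" "l < N" "j \<noteq> l" for j l
  proof -
    have "Suc j mod N \<noteq> Suc l mod N" using Suc_mod_inj that by blast
    moreover have "Suc j mod N < N" "Suc l mod N < N" using that by simp_all
    ultimately show ?thesis
      using that by (simp add: twisted_def x_less c_shift)
  qed
  then obtain g where "g \<in> Aut_D D" and g: "\<forall>j<N. g (x j) = x (Suc j mod N)"
    using twisted_cycle_extends_to_Aut_D[OF dense ncc \<open>bij \<sigma>\<close>, of N x] xD by blast
  obtain i :: 'n where True by blast
  have "c 0 i \<noteq> c 1 i" using c_inj[of 0 1 i] assms(1) by (auto simp: N_def)
  then have "x 0 \<noteq> x 1" using x_floor[of 0 i] x_floor[of 1 i] by auto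
  with \<open>g \<in> Aut_D D\<close> g xD show ?thesis unfolding N_def by blast
qed

lemma Aut_D_periodic_point:
  fixes D :: "(rat^'n) set"
  assumes "CARD('n) \<ge> 2" "dense_in_Qn D" "no_common_coord D"
  shows "\<exists>g\<in>Aut_D D. \<exists>x\<in>D. g x \<noteq> x \<and> (g ^^ CARD('n)) x = x"
proof -
  obtain g x where "g \<in> Aut_D D" and cycle: "\<forall>j<CARD('n). x j \<in> D \<and> g (x j) = x (Suc j mod CARD('n))"
    and "x 0 \<noteq> x 1"
    using Aut_D_cycle[OF assms] by blast
  have "(g ^^ CARD('n)) (x 0) = x 0"
    using funpow_cycle[of "CARD('n)" g x "CARD('n)"] cycle by simp
  moreover have "g (x 0) = x 1" "x 0 \<in> D"
    using cycle assms(1) by auto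
  ultimately show ?thesis using \<open>g \<in> Aut_D D\<close> \<open>x 0 \<noteq> x 1\<close> by metis
qed

theorem proposition6p1:
  fixes D :: "(rat^'n) set"
  assumes "CARD('n) \<ge> 2"
    and "dense_in_Qn D"
    and "no_common_coord D"
  shows "\<not> extremely_amenable (Aut_D D) (compose D) (restrict id D) (Aut_topology D)
           TYPE((rat^'n \<Rightarrow> rat^'n) set set)"
proof
  assume EA: "extremely_amenable (Aut_D D) (compose D) (restrict id D) (Aut_topology D)
           TYPE((rat^'n \<Rightarrow> rat^'n) set set)"
  define emb :: "((rat^'n) \<times> (rat^'n) \<Rightarrow> bool) \<Rightarrow> (rat^'n \<Rightarrow> rat^'n) set set"
    where "emb = (\<lambda>R. (\<lambda>p. {(\<lambda>(a, b) z. if z = (\<chi> _. 0) then a else b) p}) ` Collect R)"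
  have "(\<chi> _. 0) \<noteq> ((\<chi> _. 1) :: rat^'n)" by (simp add: vec_eq_iff)
  then have "inj emb"
    unfolding emb_def by (intro inj_pred_as_set_set inj_pair_as_fun)
  then have "extremely_amenable (Aut_D D) (compose D) (restrict id D) (Aut_topology D)
               TYPE((rat^'n) \<times> (rat^'n) \<Rightarrow> bool)"
    by (rule extremely_amenable_inj_type[OF EA])
  moreover have "Aut_topology D = pointwise_topology D (Aut_D D)"
    by (simp add: Aut_topology_def pointwise_topology_def)
  moreover obtain g x where "g \<in> Aut_D D" "x \<in> D" "g x \<noteq> x" "(g ^^ CARD('n)) x = x"
    using Aut_D_periodic_point[OF assms] by blast
  moreover have "\<forall>g\<in>Aut_D D. bij_betw g D D" by (simp add: Aut_D_def)
  ultimately show False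
    using extremely_amenable_periodic_point_fixed[of "Aut_D D" D g x "CARD('n)"] countable_rat_vec
    by simp
qed

end
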